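(* Let $\mathfrak f$ be a simple compact Lie algebra and $n\in\mathbb N$. Suppose a Lie subalgebra $\mathfrak k\subset n\mathfrak f$ contains $\mathrm{diag}(\mathfrak f)=\{(X,\dots,X):X\in\mathfrak f\}$. Then there is a decomposition $n\mathfrak f=\bigoplus_{i=1}^s n_i\mathfrak f$ into a direct sum of ideals (grouping the $n$ copies of $\mathfrak f$ into $s$ groups of sizes $n_i$), with $s\ge1$, $n_i\ge1$, $\sum_in_i=n$, such that $\mathfrak k=\mathfrak k_1\oplus\cdots\oplus\mathfrak k_s$ with $\mathfrak k_i=\mathrm{diag}(\mathfrak f)\subset n_i\mathfrak f$.
   Context: $n\mathfrak f=\mathfrak f\oplus\cdots\oplus\mathfrak f$ ($n$ copies). *)

theory Defs
  imports "HOL-Analysis.Analysis" "HOL-Library.Disjoint_Sets"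
begin

definition lie_algebra :: "('a::real_vector \<Rightarrow> 'a \<Rightarrow> 'a) \<Rightarrow> bool" where
  "lie_algebra br \<longleftrightarrow>
     (\<forall>x. linear (br x)) \<and> (\<forall>y. linear (\<lambda>x. br x y)) \<and>
     (\<forall>x. br x x = 0) \<and>
     (\<forall>x y z. br x (br y z) + br y (br z x) + br z (br x y) = 0)"

definition lie_ideal :: "('a::real_vector \<Rightarrow> 'a \<Rightarrow> 'a) \<Rightarrow> 'a set \<Rightarrow> bool" where
  "lie_ideal br I \<longleftrightarrow> subspace I \<and> (\<forall>x y. y \<in> I \<longrightarrow> br x y \<in> I)"

definition lie_subalgebra :: "('a::real_vector \<Rightarrow> 'a \<Rightarrow> 'a) \<Rightarrow> 'a set \<Rightarrow> bool" where
  "lie_subalgebra br K \<longleftrightarrow> subspace K \<and> (\<forall>x\<in>K. \<forall>y\<in>K. br x y \<in> K)"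

definition simple_lie_algebra :: "('a::real_vector \<Rightarrow> 'a \<Rightarrow> 'a) \<Rightarrow> bool" where
  "simple_lie_algebra br \<longleftrightarrow> lie_algebra br \<and> (\<exists>x y. br x y \<noteq> 0) \<and>
     (\<forall>I. lie_ideal br I \<longrightarrow> I = {0} \<or> I = UNIV)"

definition compact_lie_algebra :: "('a::real_vector \<Rightarrow> 'a \<Rightarrow> 'a) \<Rightarrow> bool" where
  "compact_lie_algebra br \<longleftrightarrow> lie_algebra br \<and>
     (\<exists>B :: 'a \<Rightarrow> 'a \<Rightarrow> real.
        (\<forall>x. linear (B x)) \<and> (\<forall>x y. B x y = B y x) \<and> (\<forall>x. x \<noteq> 0 \<longrightarrow> B x x > 0) \<and>
        (\<forall>x y z. B (br x y) z = - B y (br x z)))"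

text \<open>Componentwise bracket on the direct sum n f = f \<oplus> ... \<oplus> f, indexed by the finite type 'n.\<close>
definition sum_bracket :: "('a \<Rightarrow> 'a \<Rightarrow> 'a) \<Rightarrow> 'a^'n \<Rightarrow> 'a^'n \<Rightarrow> 'a^'n" where
  "sum_bracket br x y = (\<chi> i. br (x $ i) (y $ i))"

definition diag :: "('a^'n) set" where
  "diag = {(\<chi> i. X) | X. True}"

end

theory Submission
  imports Defs
begin

text \<open>Call two indices unseparated if every element of \<open>K\<close> has equal components there;
  the classes of this equivalence relation are the blocks. Everything in \<open>K\<close> is constant on
  blocks, and the converse reduces to showing, for a block \<open>B\<close> and \<open>i \<in> B\<close>, that the
  \<open>i\<close>-th components of the elements of \<open>K\<close> vanishing outside \<open>B\<close> exhaust the simple algebra.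
  These components form an ideal, since bracketing with the diagonal acts componentwise.
  Imposing vanishing at the indices outside \<open>B\<close> one at a time, the ideal stays everything:
  vanishing at a single \<open>j\<close> leaves a nonzero ideal (subtract from an \<open>x \<in> K\<close> separating
  \<open>i\<close> and \<open>j\<close> the diagonal element through \<open>x $ j\<close>), and the bracket of an element vanishing
  on the previous indices with one vanishing at \<open>j\<close> vanishes on both, so the new ideal
  contains all brackets.\<close>

definition vanishing_component :: "('a::real_vector^'n) set \<Rightarrow> 'n \<Rightarrow> 'n set \<Rightarrow> 'a set" where
  "vanishing_component K i T = {z $ i | z. z \<in> K \<and> (\<forall>t\<in>T. z $ t = 0)}"

definition unseparated :: "('a^'n) set \<Rightarrow> 'n rel" where
  "unseparated K = {(i, j). \<forall>x\<in>K. x $ i = x $ j}"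

lemma lie_algebra_bracket_zero:
  assumes "lie_algebra br"
  shows "br x 0 = 0" "br 0 y = 0"
proof -
  have "linear (br x)" "linear (\<lambda>x. br x y)"
    using assms unfolding lie_algebra_def by auto
  then show "br x 0 = 0" "br 0 y = 0"
    using linear_0 by fastforce+
qed

lemma simple_lie_ideal_eq_UNIV:
  assumes "simple_lie_algebra br" "lie_ideal br I" "v \<in> I" "v \<noteq> 0"
  shows "I = UNIV"
  using assms unfolding simple_lie_algebra_def by auto

lemma simple_lie_ideal_eq_UNIV_if_brackets:
  assumes "simple_lie_algebra br" "lie_ideal br I" "\<And>a b. br a b \<in> I"
  shows "I = UNIV"
proof -
  obtain a b where "br a b \<noteq> 0"
    using assms(1) unfolding simple_lie_algebra_def by auto
  then show ?thesis
    using simple_lie_ideal_eq_UNIV[OF assms(1,2) assms(3)] by blast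
qed

lemma const_vec_mem:
  assumes "diag \<subseteq> K"
  shows "(\<chi> k. a) \<in> K"
  using assms unfolding diag_def by auto

lemma subspace_vanishing_component:
  fixes K :: "('a::real_vector^'n) set"
  assumes "subspace K"
  shows "subspace (vanishing_component K i T)"
proof -
  have "vanishing_component K i T = (\<lambda>z. z $ i) ` (K \<inter> {z. \<forall>t\<in>T. z $ t = 0})"
    unfolding vanishing_component_def by auto
  moreover have "linear (\<lambda>z::'a^'n. z $ i)"
    by (rule linearI) simp_all
  moreover have "subspace {z::'a^'n. \<forall>t\<in>T. z $ t = 0}"
    by (auto simp: subspace_def)
  ultimately show ?thesis
    by (simp add: linear_subspace_image subspace_inter assms)
qed

lemma bracket_vanishing_component:
  assumes "lie_algebra br" "lie_subalgebra (sum_bracket br) K"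
    and "a \<in> vanishing_component K i S" "b \<in> vanishing_component K i T"
  shows "br a b \<in> vanishing_component K i (S \<union> T)"
proof -
  obtain u where u: "u \<in> K" "\<forall>t\<in>S. u $ t = 0" "a = u $ i"
    using assms(3) unfolding vanishing_component_def by blast
  obtain v where v: "v \<in> K" "\<forall>t\<in>T. v $ t = 0" "b = v $ i"
    using assms(4) unfolding vanishing_component_def by blast
  have "sum_bracket br u v \<in> K"
    using assms(2) u v unfolding lie_subalgebra_def by auto
  then show ?thesis
    using u v lie_algebra_bracket_zero[OF assms(1)] unfolding vanishing_component_def
    by (intro CollectI exI[of _ "sum_bracket br u v"]) (auto simp: sum_bracket_def)
qed

lemma lie_ideal_vanishing_component:
  assumes "lie_algebra br" "lie_subalgebra (sum_bracket br) K" "diag \<subseteq> K"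
  shows "lie_ideal br (vanishing_component K i T)"
proof -
  have "br x y \<in> vanishing_component K i T" if "y \<in> vanishing_component K i T" for x y
  proof -
    have "x \<in> vanishing_component K i {}"
      using const_vec_mem[OF assms(3)] unfolding vanishing_component_def
      by (intro CollectI exI[of _ "\<chi> k. x"]) simp
    then show ?thesis
      using bracket_vanishing_component[OF assms(1,2)] that by fastforce
  qed
  moreover have "subspace K"
    using assms(2) unfolding lie_subalgebra_def by simp
  ultimately show ?thesis
    unfolding lie_ideal_def by (simp add: subspace_vanishing_component)
qed

lemma vanishing_component_separated_eq_UNIV:
  fixes K :: "('a::real_vector^'n::finite) set"
  assumes simple: "simple_lie_algebra br" and sub: "lie_subalgebra (sum_bracket br) K"
    and "diag \<subseteq> K" and "\<forall>j\<in>T. \<exists>x\<in>K. x $ i \<noteq> x $ j"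
  shows "vanishing_component K i T = UNIV"
proof -
  have la: "lie_algebra br" using simple unfolding simple_lie_algebra_def by simp
  note ideal = lie_ideal_vanishing_component[OF la sub \<open>diag \<subseteq> K\<close>]
  show ?thesis using finite[of T] \<open>\<forall>j\<in>T. _\<close>
  proof (induction T rule: finite_induct)
    case empty
    have "a \<in> vanishing_component K i {}" for a
      using const_vec_mem[OF \<open>diag \<subseteq> K\<close>] unfolding vanishing_component_def
      by (intro CollectI exI[of _ "\<chi> k. a"]) simp
    then show ?case by blast
  next
    case (insert j T)
    obtain x where x: "x \<in> K" "x $ i \<noteq> x $ j" using insert.prems by auto
    have "x - (\<chi> k. x $ j) \<in> K"
      using sub x(1) const_vec_mem[OF \<open>diag \<subseteq> K\<close>] subspace_diff
      unfolding lie_subalgebra_def by blast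
    then have "x $ i - x $ j \<in> vanishing_component K i {j}"
      unfolding vanishing_component_def by (intro CollectI exI[of _ "x - (\<chi> k. x $ j)"]) simp
    then have at_j: "vanishing_component K i {j} = UNIV"
      using simple_lie_ideal_eq_UNIV[OF simple ideal] x(2) by simp
    have "br a b \<in> vanishing_component K i (insert j T)" for a b
      using bracket_vanishing_component[OF la sub, of a i T b "{j}"] insert at_j by simp
    then show ?case
      using simple_lie_ideal_eq_UNIV_if_brackets[OF simple ideal] by blast
  qed
qed

lemma equiv_unseparated: "equiv UNIV (unseparated K)"
  unfolding unseparated_def equiv_def refl_on_def sym_def trans_def by auto

lemma unseparated_class_const:
  assumes "x \<in> K" "B \<in> UNIV // unseparated K" "i \<in> B" "j \<in> B"
  shows "x $ i = x $ j"
  using in_quotient_imp_in_rel[OF equiv_unseparated assms(2), of i j] assms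
  by (simp add: unseparated_def)

lemma restriction_to_class_mem:
  fixes K :: "('a::real_vector^'n::finite) set"
  assumes "simple_lie_algebra br" "lie_subalgebra (sum_bracket br) K" "diag \<subseteq> K"
    and B: "B \<in> UNIV // unseparated K" and x: "\<forall>i\<in>B. \<forall>j\<in>B. x $ i = x $ j"
  shows "(\<chi> j. if j \<in> B then x $ j else 0) \<in> K"
proof -
  obtain i where Bi: "B = unseparated K `` {i}"
    using B unfolding quotient_def by auto
  have "vanishing_component K i (- B) = UNIV"
    using vanishing_component_separated_eq_UNIV[OF assms(1-3)] Bi
    by (simp add: unseparated_def)
  then have "x $ i \<in> vanishing_component K i (- B)" by simp
  then obtain z where z: "z \<in> K" "\<forall>t\<in>-B. z $ t = 0" "z $ i = x $ i"
    unfolding vanishing_component_def by (auto dest: sym)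
  have "i \<in> B" using Bi by (simp add: unseparated_def)
  have "z $ j = x $ j" if "j \<in> B" for j
  proof -
    have "z $ j = z $ i" using unseparated_class_const[OF z(1) B that \<open>i \<in> B\<close>] .
    also have "\<dots> = x $ i" by (rule z(3))
    also have "\<dots> = x $ j" using x that \<open>i \<in> B\<close> by blast
    finally show ?thesis .
  qed
  then have "z = (\<chi> j. if j \<in> B then x $ j else 0)"
    using z(2) by (auto simp: vec_eq_iff)
  then show ?thesis using z(1) by simp
qed

lemma sum_restrictions_to_partition:
  fixes x :: "'a::comm_monoid_add^'n::finite"
  assumes "partition_on UNIV P"
  shows "(\<Sum>B\<in>P. \<chi> j. if j \<in> B then x $ j else 0) = x"
proof -
  have "(\<Sum>B\<in>P. if j \<in> B then x $ j else 0) = x $ j" for j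
  proof -
    obtain B0 where B0: "B0 \<in> P" "j \<in> B0"
      using partition_onD1[OF assms] by blast
    then have "j \<in> B \<longleftrightarrow> B = B0" if "B \<in> P" for B
      using partition_onD2[OF assms] that by (auto simp: disjoint_def)
    then have "(\<Sum>B\<in>P. if j \<in> B then x $ j else 0) = (\<Sum>B\<in>P. if B = B0 then x $ j else 0)"
      by (intro sum.cong) auto
    then show ?thesis
      using B0(1) by simp
  qed
  moreover have "finite P"
    using partition_onD1[OF assms] finite_UnionD[of P] by simp
  ultimately show ?thesis by (simp add: vec_eq_iff)
qed

theorem mainTheorem8:
  fixes br :: "'a::euclidean_space \<Rightarrow> 'a \<Rightarrow> 'a"
    and K :: "('a^'n::finite) set"
  assumes "simple_lie_algebra br"
    and "compact_lie_algebra br"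
    and "lie_subalgebra (sum_bracket br) K"
    and "diag \<subseteq> K"
  shows "\<exists>P. partition_on (UNIV :: 'n set) P \<and>
             K = {x. \<forall>B\<in>P. \<forall>i\<in>B. \<forall>j\<in>B. x $ i = x $ j}"
proof (intro exI conjI)
  let ?P = "UNIV // unseparated K"
  show part: "partition_on UNIV ?P"
    by (rule partition_on_quotient[OF equiv_unseparated])
  show "K = {x. \<forall>B\<in>?P. \<forall>i\<in>B. \<forall>j\<in>B. x $ i = x $ j}"
  proof (intro equalityI subsetI)
    fix x :: "'a^'n" assume "x \<in> K"
    then show "x \<in> {x. \<forall>B\<in>?P. \<forall>i\<in>B. \<forall>j\<in>B. x $ i = x $ j}"
      by (blast intro: unseparated_class_const)
  next
    fix x :: "'a^'n" assume x: "x \<in> {x. \<forall>B\<in>?P. \<forall>i\<in>B. \<forall>j\<in>B. x $ i = x $ j}"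
    have "subspace K"
      using assms(3) unfolding lie_subalgebra_def by simp
    moreover have "(\<chi> j. if j \<in> B then x $ j else 0) \<in> K" if "B \<in> ?P" for B
      using restriction_to_class_mem[OF assms(1,3,4) that bspec[OF x[unfolded mem_Collect_eq] that]] .
    ultimately have "(\<Sum>B\<in>?P. \<chi> j. if j \<in> B then x $ j else 0) \<in> K"
      by (rule subspace_sum)
    then show "x \<in> K"
      by (simp add: sum_restrictions_to_partition[OF part])
  qed
qed

end
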